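(* Let $\mathcal S\subseteq\mathsf P^n$ be the stabilizer group of a stabilizer code, let $g_1,\dots,g_m\in\mathcal S$, and in $\mathsf P_{DS}=\mathsf P^n\times\mathbb F_2^m$ let $f_i=(g_i,\hat i)$ ($\hat i$ the $i$-th standard basis vector), $\mathcal M=\langle f_1,\dots,f_m\rangle$, $\mathcal U=\mathcal M^\perp$. View $\mathcal S$ as $\{(s,0):s\in\mathcal S\}\subseteq\mathsf P_{DS}$, let $\mathcal L=\mathcal S^\perp$ (in $\mathsf P_{DS}$), and let the distance $d$ be the minimal weight (number of nonidentity coordinates among the $n+m$) of an element of $\mathcal U\setminus\mathcal S$. Let $\Gamma\subseteq 2^{[n+m]}$ with $|\gamma|\le\lfloor\frac{d-1}2\rfloor$ for all $\gamma$, and $P=\mathop{\ast}_{\gamma\in\Gamma}P_\gamma$ a distribution of errors $(e_d,e_m)\in\mathsf P_{DS}$ with each $P_\gamma$ supported on elements with support in $\gamma$ and $P_\gamma(I)>\frac12$. Let $P_m$ be the distribution on $\mathsf P_{DS}$ of $(I,e_m)$ where $(e_d,e_m)\sim P$, and $\tilde P=P\ast P_m$ (the distribution effectively observed when comparing syndromes of consecutive rounds). Then the logical channel $P_L(e)=\frac1{|\mathcal S|}\sum_{s\in\mathcal S}P(e\,(s,0))$ is uniquely determined by the syndrome statistics $\tilde E(s)=\sum_{e\in\mathsf P_{DS}}\langle s,e\rangle\tilde P(e)$, $s\in\mathcal M$ (among all such channels with the same $\Gamma$).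
   Context: $\mathsf P^n$ is the $n$-qubit Pauli group modulo phases. Bicharacter on $\mathsf P_{DS}$: $\langle(a,x),(b,y)\rangle=\langle a,b\rangle(-1)^{\sum_i x_iy_i}$, where $\langle a,b\rangle=+1$ if the Paulis $a,b$ commute and $-1$ otherwise; $B^\perp=\{c:\langle c,b\rangle=1\ \forall b\in B\}$. The support of $(e_d,e_m)$ is the set of qubit positions where $e_d$ is nonidentity together with positions $n+i$ where $e_m[i]=1$. Convolution: $(f\ast g)(a)=\sum_b f(b)g(ab)$. Phenomenological model: in each round a new error $(e_d,e_m)\sim P$ occurs, $e_d$ a data error and $e_m$ flips of the outcomes of the measurements of $g_1,\dots,g_m$. *)

theory Defs
  imports Complex_Main "HOL-Library.FuncSet"
begin

text \<open>An element of P_DS = P^n x F_2^m modulo phases is represented by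
  (x, z, e): x, z the X- and Z-parts of the data Pauli (qubit i carries
  I=(0,0), X=(1,0), Z=(0,1), Y=(1,1)) and e the measurement-flip vector.\<close>

type_synonym pds = "(nat \<Rightarrow> bool) \<times> (nat \<Rightarrow> bool) \<times> (nat \<Rightarrow> bool)"

definition xp :: "pds \<Rightarrow> nat \<Rightarrow> bool" where "xp a = fst a"
definition zp :: "pds \<Rightarrow> nat \<Rightarrow> bool" where "zp a = fst (snd a)"
definition ep :: "pds \<Rightarrow> nat \<Rightarrow> bool" where "ep a = snd (snd a)"

definition carrier :: "nat \<Rightarrow> nat \<Rightarrow> pds set" where
  "carrier n m = {a. (\<forall>i\<ge>n. \<not> xp a i \<and> \<not> zp a i) \<and> (\<forall>i\<ge>m. \<not> ep a i)}"

definition ident :: pds where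
  "ident = (\<lambda>_. False, \<lambda>_. False, \<lambda>_. False)"

definition mult :: "pds \<Rightarrow> pds \<Rightarrow> pds" where
  "mult a b = (\<lambda>i. xp a i \<noteq> xp b i, \<lambda>i. zp a i \<noteq> zp b i, \<lambda>i. ep a i \<noteq> ep b i)"

definition gprod :: "'i set \<Rightarrow> ('i \<Rightarrow> pds) \<Rightarrow> pds" where
  "gprod T c = (\<lambda>i. odd (card {t\<in>T. xp (c t) i}),
                \<lambda>i. odd (card {t\<in>T. zp (c t) i}),
                \<lambda>i. odd (card {t\<in>T. ep (c t) i}))"

text \<open>Bicharacter: commutation sign of the data Paulis times (-1)^(sum x_i y_i).
  Paulis on qubit i anticommute iff x_a z_b + z_a x_b is odd.\<close>
definition bichar :: "nat \<Rightarrow> nat \<Rightarrow> pds \<Rightarrow> pds \<Rightarrow> real" where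
  "bichar n m a b =
     (-1) ^ (card {i. i < n \<and> ((xp a i \<and> zp b i) \<noteq> (zp a i \<and> xp b i))}
           + card {i. i < m \<and> ep a i \<and> ep b i})"

definition perp :: "nat \<Rightarrow> nat \<Rightarrow> pds set \<Rightarrow> pds set" where
  "perp n m B = {c \<in> carrier n m. \<forall>b\<in>B. bichar n m c b = 1}"

definition supp :: "nat \<Rightarrow> nat \<Rightarrow> pds \<Rightarrow> nat set" where
  "supp n m a = {i. i < n \<and> (xp a i \<or> zp a i)} \<union> {n + i | i. i < m \<and> ep a i}"

definition weight :: "nat \<Rightarrow> nat \<Rightarrow> pds \<Rightarrow> nat" where
  "weight n m a = card (supp n m a)"

definition stabilizer_group :: "nat \<Rightarrow> pds set \<Rightarrow> bool" where
  "stabilizer_group n S \<longleftrightarrow> S \<subseteq> carrier n 0 \<and> ident \<in> S \<and>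
     (\<forall>a\<in>S. \<forall>b\<in>S. mult a b \<in> S) \<and> (\<forall>a\<in>S. \<forall>b\<in>S. bichar n 0 a b = 1)"

definition fgen :: "(nat \<Rightarrow> pds) \<Rightarrow> nat \<Rightarrow> pds" where
  "fgen g i = (xp (g i), zp (g i), \<lambda>j. j = i)"

definition Mgrp :: "nat \<Rightarrow> (nat \<Rightarrow> pds) \<Rightarrow> pds set" where
  "Mgrp m g = {gprod T (fgen g) | T. T \<subseteq> {..<m}}"

definition Ugrp :: "nat \<Rightarrow> nat \<Rightarrow> (nat \<Rightarrow> pds) \<Rightarrow> pds set" where
  "Ugrp n m g = perp n m (Mgrp m g)"

definition code_distance :: "nat \<Rightarrow> nat \<Rightarrow> pds set \<Rightarrow> (nat \<Rightarrow> pds) \<Rightarrow> nat" where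
  "code_distance n m S g = Inf (weight n m ` (Ugrp n m g - S))"

definition is_dist :: "nat \<Rightarrow> nat \<Rightarrow> (pds \<Rightarrow> real) \<Rightarrow> bool" where
  "is_dist n m p \<longleftrightarrow> (\<forall>a. p a \<ge> 0) \<and> (\<forall>a. a \<notin> carrier n m \<longrightarrow> p a = 0)
      \<and> sum p (carrier n m) = 1"

definition conv :: "nat \<Rightarrow> nat \<Rightarrow> (pds \<Rightarrow> real) \<Rightarrow> (pds \<Rightarrow> real) \<Rightarrow> pds \<Rightarrow> real" where
  "conv n m f h a = (\<Sum>b\<in>carrier n m. f b * h (mult a b))"

text \<open>Convolution of the family P_gamma, gamma in Gamma (the iterated convolution,
  written out: sum over all tuples of elements whose product is a).\<close>
definition conv_family :: "nat \<Rightarrow> nat \<Rightarrow> nat set set \<Rightarrow> (nat set \<Rightarrow> pds \<Rightarrow> real) \<Rightarrow> pds \<Rightarrow> real" where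
  "conv_family n m \<Gamma> Pf a =
     (\<Sum>c\<in>PiE \<Gamma> (\<lambda>_. carrier n m). if gprod \<Gamma> c = a then (\<Prod>\<gamma>\<in>\<Gamma>. Pf \<gamma> (c \<gamma>)) else 0)"

definition meas_part :: "nat \<Rightarrow> nat \<Rightarrow> (pds \<Rightarrow> real) \<Rightarrow> pds \<Rightarrow> real" where
  "meas_part n m p a =
     (if (\<forall>i. \<not> xp a i \<and> \<not> zp a i)
      then (\<Sum>b\<in>{b\<in>carrier n m. ep b = ep a}. p b) else 0)"

definition tilde :: "nat \<Rightarrow> nat \<Rightarrow> (pds \<Rightarrow> real) \<Rightarrow> pds \<Rightarrow> real" where
  "tilde n m p = conv n m p (meas_part n m p)"

definition synd_stat :: "nat \<Rightarrow> nat \<Rightarrow> (pds \<Rightarrow> real) \<Rightarrow> pds \<Rightarrow> real" where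
  "synd_stat n m p s = (\<Sum>e\<in>carrier n m. bichar n m s e * p e)"

definition logical_channel :: "pds set \<Rightarrow> (pds \<Rightarrow> real) \<Rightarrow> pds \<Rightarrow> real" where
  "logical_channel S p e = (1 / real (card S)) * (\<Sum>s\<in>S. p (mult e s))"

definition admissible :: "nat \<Rightarrow> nat \<Rightarrow> nat set set \<Rightarrow> (nat set \<Rightarrow> pds \<Rightarrow> real) \<Rightarrow> bool" where
  "admissible n m \<Gamma> Pf \<longleftrightarrow> (\<forall>\<gamma>\<in>\<Gamma>. is_dist n m (Pf \<gamma>)
      \<and> (\<forall>a. Pf \<gamma> a \<noteq> 0 \<longrightarrow> supp n m a \<subseteq> \<gamma>) \<and> Pf \<gamma> ident > 1/2)"

end

theory Submission
  imports Defs
begin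

text \<open>
  The transform F_P(u) = sum_e <u,e> P(e) (synd_stat) turns convolutions into products.
  Hence F_P is the product of the F_(P_gamma), each positive because P_gamma(I) > 1/2, and
  the observed statistics are F_P(s) F_P(mu s), where mu keeps only the measurement part.
  So the log-ratio L = ln F_P - ln F_Q of two admissible channels is a character expansion
  whose frequencies are supported in single sets gamma, and L + L o mu vanishes on M.
  Two such frequencies that agree on M differ by an element of U of weight below d, hence
  by a stabilizer, so they also agree on S-perp; this forces L + L o mu, and then L, to
  vanish on S-perp. The logical channel, the average of P over the cosets of S, is
  determined by F_P on S-perp.
\<close>

lemma pds_eq_iff: "(a::pds) = b \<longleftrightarrow> xp a = xp b \<and> zp a = zp b \<and> ep a = ep b"
  by (auto simp: xp_def zp_def ep_def prod_eq_iff)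

lemma mult_simps [simp]:
  "xp (mult a b) i = (xp a i \<noteq> xp b i)"
  "zp (mult a b) i = (zp a i \<noteq> zp b i)"
  "ep (mult a b) i = (ep a i \<noteq> ep b i)"
  by (auto simp: mult_def xp_def zp_def ep_def)

lemma ident_simps [simp]: "\<not> xp ident i" "\<not> zp ident i" "\<not> ep ident i"
  by (auto simp: ident_def xp_def zp_def ep_def)

lemma mult_self [simp]: "mult a a = ident"
  by (auto simp: pds_eq_iff)

lemma mult_ident [simp]: "mult a ident = a" "mult ident a = a"
  by (auto simp: pds_eq_iff)

lemma mult_cancel [simp]: "mult (mult a b) b = a" "mult a (mult a b) = b"
  by (auto simp: pds_eq_iff)

lemma mult_eq_ident_iff: "mult a b = ident \<longleftrightarrow> a = b"
  by (auto simp: pds_eq_iff fun_eq_iff)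

lemma mult_in_carrier: "a \<in> carrier n m \<Longrightarrow> b \<in> carrier n m \<Longrightarrow> mult a b \<in> carrier n m"
  by (auto simp: carrier_def)

lemma ident_in_carrier [simp]: "ident \<in> carrier n m"
  by (auto simp: carrier_def)

lemma finite_carrier: "finite (carrier n m)"
proof -
  let ?decode = "\<lambda>(A, B, C). ((\<lambda>i. i \<in> A), (\<lambda>i. i \<in> B), (\<lambda>i. i \<in> C)) :: pds"
  have "carrier n m \<subseteq> ?decode ` (Pow {..<n} \<times> Pow {..<n} \<times> Pow {..<m})"
  proof
    fix a assume "a \<in> carrier n m"
    then show "a \<in> ?decode ` (Pow {..<n} \<times> Pow {..<n} \<times> Pow {..<m})"
      by (intro image_eqI[where x = "({i. xp a i}, {i. zp a i}, {i. ep a i})"])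
        (auto simp: carrier_def xp_def zp_def ep_def not_less[symmetric])
  qed
  then show ?thesis
    by (rule finite_subset) auto
qed

lemma gprod_simps [simp]:
  "xp (gprod T c) i = odd (card {t \<in> T. xp (c t) i})"
  "zp (gprod T c) i = odd (card {t \<in> T. zp (c t) i})"
  "ep (gprod T c) i = odd (card {t \<in> T. ep (c t) i})"
  by (simp_all add: gprod_def xp_def zp_def ep_def)

lemma gprod_empty [simp]: "gprod {} c = ident"
  by (simp add: pds_eq_iff fun_eq_iff)

lemma gprod_insert:
  assumes "finite T" "t \<notin> T"
  shows "gprod (insert t T) c = mult (c t) (gprod T c)"
proof -
  have parity: "odd (card {t' \<in> insert t T. P t'}) \<longleftrightarrow> P t \<noteq> odd (card {t' \<in> T. P t'})" for P
  proof -
    have "{t' \<in> insert t T. P t'} = (if P t then insert t {t' \<in> T. P t'} else {t' \<in> T. P t'})"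
      by auto
    then show ?thesis
      using assms by auto
  qed
  show ?thesis
    unfolding pds_eq_iff fun_eq_iff mult_simps gprod_simps
    using parity[of "\<lambda>t. xp (c t) _"] parity[of "\<lambda>t. zp (c t) _"] parity[of "\<lambda>t. ep (c t) _"]
    by blast
qed

lemma gprod_singleton [simp]: "gprod {t} c = c t"
  using gprod_insert[of "{}" t c] by simp

lemma gprod_in_carrier:
  "finite T \<Longrightarrow> (\<And>t. t \<in> T \<Longrightarrow> c t \<in> carrier n m) \<Longrightarrow> gprod T c \<in> carrier n m"
  by (induction T rule: finite_induct) (simp_all add: gprod_insert mult_in_carrier)

definition bool_sign :: "bool \<Rightarrow> real" where
  "bool_sign b = (if b then -1 else 1)"

lemma bool_sign_xor: "bool_sign (p \<noteq> q) = bool_sign p * bool_sign q"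
  by (auto simp: bool_sign_def)

lemma prod_bool_sign: "finite A \<Longrightarrow> (\<Prod>i\<in>A. bool_sign (P i)) = (-1) ^ card {i \<in> A. P i}"
  by (simp add: bool_sign_def prod.If_cases Int_def)

lemma bichar_as_prod:
  "bichar n m a b =
     (\<Prod>i<n. bool_sign ((xp a i \<and> zp b i) \<noteq> (zp a i \<and> xp b i))) * (\<Prod>i<m. bool_sign (ep a i \<and> ep b i))"
  by (simp add: bichar_def prod_bool_sign power_add)

lemma bichar_commute: "bichar n m a b = bichar n m b a"
  unfolding bichar_as_prod
  by (intro arg_cong2[where f = "(*)"] prod.cong) (auto simp: bool_sign_def)

lemma bichar_mult_right: "bichar n m a (mult b c) = bichar n m a b * bichar n m a c"
proof -
  have data: "((xa \<and> (zb \<noteq> zc)) \<noteq> (za \<and> (xb \<noteq> xc))) =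
      (((xa \<and> zb) \<noteq> (za \<and> xb)) \<noteq> ((xa \<and> zc) \<noteq> (za \<and> xc)))" for xa za xb zb xc zc
    by auto
  have flips: "(ea \<and> (eb \<noteq> ec)) = ((ea \<and> eb) \<noteq> (ea \<and> ec))" for ea eb ec
    by auto
  show ?thesis
    unfolding bichar_as_prod mult_simps data flips bool_sign_xor prod.distrib
    by (simp only: mult_ac)
qed

lemma bichar_mult_left: "bichar n m (mult b c) a = bichar n m b a * bichar n m c a"
  by (simp add: bichar_commute[of n m _ a] bichar_mult_right)

lemma bichar_ident [simp]: "bichar n m a ident = 1" "bichar n m ident a = 1"
  by (simp_all add: bichar_def)

lemma bichar_cases: "bichar n m a b = 1 \<or> bichar n m a b = -1"
proof -
  have "(-1::real) ^ k = 1 \<or> (-1::real) ^ k = -1" for k :: nat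
    by (simp add: minus_one_power_iff)
  then show ?thesis
    unfolding bichar_def by blast
qed

lemma bichar_eq_if_bichar_mult_eq_1:
  "bichar n m u (mult a b) = 1 \<Longrightarrow> bichar n m u a = bichar n m u b"
  using bichar_cases[of n m u a] bichar_cases[of n m u b] by (auto simp: bichar_mult_right)

lemma bichar_gprod: "finite T \<Longrightarrow> bichar n m u (gprod T c) = (\<Prod>t\<in>T. bichar n m u (c t))"
  by (induction T rule: finite_induct)
    (simp_all add: gprod_insert bichar_mult_right)

lemma sum_eq_0_if_translation_negates:
  assumes "finite A" "\<And>a b. a \<in> A \<Longrightarrow> b \<in> A \<Longrightarrow> mult a b \<in> A" "a0 \<in> A"
    and "\<And>a. a \<in> A \<Longrightarrow> f (mult a a0) = - f a"
  shows "sum f A = (0::real)"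
proof -
  have "sum f A = (\<Sum>a\<in>A. f (mult a a0))"
    by (rule sum.reindex_bij_witness[of _ "\<lambda>a. mult a a0" "\<lambda>a. mult a a0"]) (auto simp: assms)
  also have "\<dots> = - sum f A"
    using assms(4) by (simp add: sum_negf)
  finally show ?thesis
    by simp
qed

definition supported :: "nat \<Rightarrow> nat \<Rightarrow> nat set \<Rightarrow> pds set" where
  "supported n m \<gamma> = {a \<in> carrier n m. supp n m a \<subseteq> \<gamma>}"

lemma supp_mult: "supp n m (mult a b) \<subseteq> supp n m a \<union> supp n m b"
  by (auto simp: supp_def)

lemma mult_in_supported:
  "a \<in> supported n m \<gamma> \<Longrightarrow> b \<in> supported n m \<gamma> \<Longrightarrow> mult a b \<in> supported n m \<gamma>"
  unfolding supported_def using supp_mult[of n m a b] mult_in_carrier by blast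

lemma ident_in_supported [simp]: "ident \<in> supported n m \<gamma>"
  by (auto simp: supported_def supp_def)

lemma supported_subset_carrier: "supported n m \<gamma> \<subseteq> carrier n m"
  by (auto simp: supported_def)

lemma finite_supported [simp]: "finite (supported n m \<gamma>)"
  using finite_subset[OF supported_subset_carrier finite_carrier] .

lemma supported_UNIV: "supported n m UNIV = carrier n m"
  by (auto simp: supported_def)

lemma finite_supp: "finite (supp n m a)"
  by (rule finite_subset[of _ "{..<n + m}"]) (auto simp: supp_def)

lemma supp_empty_iff:
  assumes "a \<in> carrier n m"
  shows "supp n m a = {} \<longleftrightarrow> a = ident"
proof
  assume "supp n m a = {}"
  then have "\<not> xp a i \<and> \<not> zp a i \<and> \<not> ep a i" for i
    using assms by (cases "i < n"; cases "i < m") (auto simp: supp_def carrier_def)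
  then show "a = ident"
    by (simp add: pds_eq_iff fun_eq_iff)
qed (simp add: supp_def)

lemma weight_mult_le:
  assumes "a \<in> supported n m \<gamma>" "b \<in> supported n m \<gamma>'" "finite \<gamma>" "finite \<gamma>'"
  shows "weight n m (mult a b) \<le> card \<gamma> + card \<gamma>'"
proof -
  have "supp n m (mult a b) \<subseteq> \<gamma> \<union> \<gamma>'"
    using supp_mult[of n m a b] assms(1,2) by (auto simp: supported_def)
  then have "weight n m (mult a b) \<le> card (\<gamma> \<union> \<gamma>')"
    unfolding weight_def using assms(3,4) by (intro card_mono) auto
  also have "\<dots> \<le> card \<gamma> + card \<gamma>'"
    by (rule card_Un_le)
  finally show ?thesis .
qed

definition pauli_X :: "nat \<Rightarrow> pds" where "pauli_X i = (\<lambda>j. j = i, \<lambda>_. False, \<lambda>_. False)"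
definition pauli_Z :: "nat \<Rightarrow> pds" where "pauli_Z i = (\<lambda>_. False, \<lambda>j. j = i, \<lambda>_. False)"
definition outcome_flip :: "nat \<Rightarrow> pds" where "outcome_flip i = (\<lambda>_. False, \<lambda>_. False, \<lambda>j. j = i)"

lemma bichar_pauli_X:
  assumes "i < n"
  shows "bichar n m (pauli_X i) w = bool_sign (zp w i)"
proof -
  have data: "{j. j < n \<and> ((xp (pauli_X i) j \<and> zp w j) \<noteq> (zp (pauli_X i) j \<and> xp w j))} =
      (if zp w i then {i} else {})"
    using assms by (auto simp: pauli_X_def xp_def zp_def)
  have flips: "{j. j < m \<and> ep (pauli_X i) j \<and> ep w j} = {}"
    by (auto simp: pauli_X_def ep_def)
  show ?thesis
    unfolding bichar_def data flips by (simp add: bool_sign_def)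
qed

lemma bichar_pauli_Z:
  assumes "i < n"
  shows "bichar n m (pauli_Z i) w = bool_sign (xp w i)"
proof -
  have data: "{j. j < n \<and> ((xp (pauli_Z i) j \<and> zp w j) \<noteq> (zp (pauli_Z i) j \<and> xp w j))} =
      (if xp w i then {i} else {})"
    using assms by (auto simp: pauli_Z_def xp_def zp_def)
  have flips: "{j. j < m \<and> ep (pauli_Z i) j \<and> ep w j} = {}"
    by (auto simp: pauli_Z_def ep_def)
  show ?thesis
    unfolding bichar_def data flips by (simp add: bool_sign_def)
qed

lemma bichar_outcome_flip:
  assumes "i < m"
  shows "bichar n m (outcome_flip i) w = bool_sign (ep w i)"
proof -
  have data: "{j. j < n \<and> ((xp (outcome_flip i) j \<and> zp w j) \<noteq> (zp (outcome_flip i) j \<and> xp w j))} = {}"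
    by (auto simp: outcome_flip_def xp_def zp_def)
  have flips: "{j. j < m \<and> ep (outcome_flip i) j \<and> ep w j} = (if ep w i then {i} else {})"
    using assms by (auto simp: outcome_flip_def ep_def)
  show ?thesis
    unfolding bichar_def data flips by (simp add: bool_sign_def)
qed

lemma exists_supported_bichar_minus_one:
  assumes w: "w \<in> supported n m \<gamma>" and "w \<noteq> ident"
  shows "\<exists>a\<in>supported n m \<gamma>. bichar n m a w = -1"
proof -
  have wc: "w \<in> carrier n m" and ws: "supp n m w \<subseteq> \<gamma>"
    using w by (auto simp: supported_def)
  from \<open>w \<noteq> ident\<close> obtain i where "xp w i \<or> zp w i \<or> ep w i"
    by (auto simp: pds_eq_iff fun_eq_iff)
  then consider "xp w i" "i < n" | "zp w i" "i < n" | "ep w i" "i < m"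
    using wc by (auto simp: carrier_def not_le[symmetric])
  then show ?thesis
  proof cases
    case 1
    then have "pauli_Z i \<in> supported n m \<gamma>"
      using ws by (auto simp: supported_def carrier_def supp_def pauli_Z_def xp_def zp_def ep_def)
    moreover have "bichar n m (pauli_Z i) w = -1"
      using 1 by (simp add: bichar_pauli_Z bool_sign_def)
    ultimately show ?thesis
      by blast
  next
    case 2
    then have "pauli_X i \<in> supported n m \<gamma>"
      using ws by (auto simp: supported_def carrier_def supp_def pauli_X_def xp_def zp_def ep_def)
    moreover have "bichar n m (pauli_X i) w = -1"
      using 2 by (simp add: bichar_pauli_X bool_sign_def)
    ultimately show ?thesis
      by blast
  next
    case 3
    then have "outcome_flip i \<in> supported n m \<gamma>"
      using ws by (auto simp: supported_def carrier_def supp_def outcome_flip_def xp_def zp_def ep_def)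
    moreover have "bichar n m (outcome_flip i) w = -1"
      using 3 by (simp add: bichar_outcome_flip bool_sign_def)
    ultimately show ?thesis
      by blast
  qed
qed

lemma sum_bichar_supported:
  assumes "w \<in> supported n m \<gamma>"
  shows "(\<Sum>a\<in>supported n m \<gamma>. bichar n m a w) = (if w = ident then real (card (supported n m \<gamma>)) else 0)"
proof (cases "w = ident")
  case False
  then obtain a0 where "a0 \<in> supported n m \<gamma>" "bichar n m a0 w = -1"
    using exists_supported_bichar_minus_one[OF assms] by blast
  then have "(\<Sum>a\<in>supported n m \<gamma>. bichar n m a w) = 0"
    by (intro sum_eq_0_if_translation_negates) (auto simp: mult_in_supported bichar_mult_left)
  with False show ?thesis
    by simp
qed simp

lemma sum_bichar_mult_bichar_supported:
  assumes "v \<in> supported n m \<gamma>" "w \<in> supported n m \<gamma>"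
  shows "(\<Sum>x\<in>supported n m \<gamma>. bichar n m v x * bichar n m w x) =
    (if v = w then real (card (supported n m \<gamma>)) else 0)"
proof -
  have "bichar n m v x * bichar n m w x = bichar n m x (mult v w)" for x
    by (simp add: bichar_mult_right bichar_commute[of n m x])
  then show ?thesis
    using sum_bichar_supported[of "mult v w" n m \<gamma>] assms
    by (simp add: mult_in_supported mult_eq_ident_iff)
qed

lemma synd_stat_conv: "synd_stat n m (conv n m f h) u = synd_stat n m f u * synd_stat n m h u"
proof -
  let ?G = "carrier n m"
  have translate: "(\<Sum>a\<in>?G. bichar n m u a * h (mult a b)) = bichar n m u b * synd_stat n m h u"
    if "b \<in> ?G" for b
  proof -
    have "(\<Sum>a\<in>?G. bichar n m u a * h (mult a b)) = (\<Sum>c\<in>?G. bichar n m u (mult c b) * h c)"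
      by (rule sum.reindex_bij_witness[of _ "\<lambda>a. mult a b" "\<lambda>a. mult a b"])
        (auto simp: that mult_in_carrier)
    then show ?thesis
      by (simp add: bichar_mult_right synd_stat_def sum_distrib_left mult_ac)
  qed
  have "synd_stat n m (conv n m f h) u = (\<Sum>b\<in>?G. f b * (\<Sum>a\<in>?G. bichar n m u a * h (mult a b)))"
    unfolding synd_stat_def conv_def sum_distrib_left
    by (subst sum.swap) (simp add: mult_ac)
  also have "\<dots> = (\<Sum>b\<in>?G. f b * (bichar n m u b * synd_stat n m h u))"
    by (simp add: translate)
  also have "\<dots> = synd_stat n m f u * synd_stat n m h u"
    by (simp add: synd_stat_def sum_distrib_right mult_ac)
  finally show ?thesis .
qed

lemma synd_stat_conv_family:
  assumes "finite \<Gamma>"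
  shows "synd_stat n m (conv_family n m \<Gamma> Pf) u = (\<Prod>\<gamma>\<in>\<Gamma>. synd_stat n m (Pf \<gamma>) u)"
proof -
  let ?G = "carrier n m" and ?C = "PiE \<Gamma> (\<lambda>_. carrier n m)"
  have "synd_stat n m (conv_family n m \<Gamma> Pf) u =
      (\<Sum>c\<in>?C. \<Sum>a\<in>?G. if gprod \<Gamma> c = a then bichar n m u a * (\<Prod>\<gamma>\<in>\<Gamma>. Pf \<gamma> (c \<gamma>)) else 0)"
    unfolding synd_stat_def conv_family_def sum_distrib_left
    by (subst sum.swap) (simp add: if_distrib cong: if_cong)
  also have "\<dots> = (\<Sum>c\<in>?C. bichar n m u (gprod \<Gamma> c) * (\<Prod>\<gamma>\<in>\<Gamma>. Pf \<gamma> (c \<gamma>)))"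
    using assms by (intro sum.cong refl) (simp add: finite_carrier gprod_in_carrier PiE_iff)
  also have "\<dots> = (\<Sum>c\<in>?C. \<Prod>\<gamma>\<in>\<Gamma>. bichar n m u (c \<gamma>) * Pf \<gamma> (c \<gamma>))"
    by (simp add: bichar_gprod[OF assms] prod.distrib)
  also have "\<dots> = (\<Prod>\<gamma>\<in>\<Gamma>. synd_stat n m (Pf \<gamma>) u)"
    unfolding synd_stat_def by (rule prod_sum_PiE[symmetric]) (simp_all add: assms finite_carrier)
  finally show ?thesis .
qed

definition flip_part :: "pds \<Rightarrow> pds" where
  "flip_part a = (\<lambda>_. False, \<lambda>_. False, ep a)"

lemma flip_part_simps [simp]: "\<not> xp (flip_part a) i" "\<not> zp (flip_part a) i" "ep (flip_part a) i = ep a i"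
  by (auto simp: flip_part_def xp_def zp_def ep_def)

lemma flip_part_idem [simp]: "flip_part (flip_part a) = flip_part a"
  by (simp add: pds_eq_iff fun_eq_iff)

lemma flip_part_in_carrier: "a \<in> carrier n m \<Longrightarrow> flip_part a \<in> carrier n m"
  by (auto simp: carrier_def)

lemma flip_part_in_supported: "a \<in> supported n m \<gamma> \<Longrightarrow> flip_part a \<in> supported n m \<gamma>"
  by (auto simp: supported_def carrier_def supp_def)

lemma bichar_flip_part: "bichar n m u (flip_part a) = bichar n m (flip_part u) a"
  by (simp add: bichar_def)

lemma flip_part_in_perp:
  assumes "S \<subseteq> carrier n 0" "u \<in> perp n m S"
  shows "flip_part u \<in> perp n m S"
proof -
  have "bichar n m (flip_part u) s = 1" if "s \<in> S" for s
  proof -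
    have "\<not> ep s i" for i
      using assms(1) that by (auto simp: carrier_def)
    then show ?thesis
      by (simp add: bichar_def)
  qed
  then show ?thesis
    using assms(2) flip_part_in_carrier by (auto simp: perp_def)
qed

lemma synd_stat_meas_part: "synd_stat n m (meas_part n m p) u = synd_stat n m p (flip_part u)"
proof -
  let ?G = "carrier n m"
  have meas_part_eq: "meas_part n m p a = (\<Sum>b\<in>?G. if a = flip_part b then p b else 0)" for a
  proof -
    have flip_iff: "a = flip_part b \<longleftrightarrow> (\<forall>i. \<not> xp a i \<and> \<not> zp a i) \<and> ep b = ep a" for b
      by (auto simp: pds_eq_iff fun_eq_iff)
    show ?thesis
    proof (cases "\<forall>i. \<not> xp a i \<and> \<not> zp a i")
      case True
      then show ?thesis
        unfolding meas_part_def flip_iff by (simp add: sum.inter_filter[OF finite_carrier])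
    next
      case False
      then show ?thesis
        unfolding meas_part_def flip_iff by (simp only: if_False simp_thms sum.neutral_const)
    qed
  qed
  have "synd_stat n m (meas_part n m p) u = (\<Sum>b\<in>?G. \<Sum>a\<in>?G. if a = flip_part b then bichar n m u a * p b else 0)"
    unfolding synd_stat_def meas_part_eq sum_distrib_left
    by (subst sum.swap) (simp add: if_distrib cong: if_cong)
  also have "\<dots> = (\<Sum>b\<in>?G. bichar n m u (flip_part b) * p b)"
    by (simp add: finite_carrier flip_part_in_carrier)
  finally show ?thesis
    by (simp add: synd_stat_def bichar_flip_part)
qed

lemma synd_stat_tilde: "synd_stat n m (tilde n m p) u = synd_stat n m p u * synd_stat n m p (flip_part u)"
  by (simp add: tilde_def synd_stat_conv synd_stat_meas_part)

lemma synd_stat_pos: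
  assumes "is_dist n m p" "p ident > 1/2"
  shows "synd_stat n m p u > 0"
proof -
  let ?G = "carrier n m"
  have "(\<Sum>e\<in>?G. (if e = ident then 2 * p e else 0) - p e) \<le> synd_stat n m p u"
    unfolding synd_stat_def
  proof (rule sum_mono)
    fix e
    have "p e \<ge> 0"
      using assms(1) unfolding is_dist_def by blast
    then show "(if e = ident then 2 * p e else 0) - p e \<le> bichar n m u e * p e"
      using bichar_cases[of n m u e] by auto
  qed
  moreover have "(\<Sum>e\<in>?G. (if e = ident then 2 * p e else 0) - p e) = 2 * p ident - 1"
    using assms(1) by (simp add: sum_subtractf finite_carrier is_dist_def)
  ultimately show ?thesis
    using assms(2) by linarith
qed

definition restrict_to :: "nat \<Rightarrow> nat set \<Rightarrow> pds \<Rightarrow> pds" where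
  "restrict_to n \<gamma> u = (\<lambda>i. xp u i \<and> i \<in> \<gamma>, \<lambda>i. zp u i \<and> i \<in> \<gamma>, \<lambda>i. ep u i \<and> n + i \<in> \<gamma>)"

lemma restrict_to_simps [simp]:
  "xp (restrict_to n \<gamma> u) i = (xp u i \<and> i \<in> \<gamma>)"
  "zp (restrict_to n \<gamma> u) i = (zp u i \<and> i \<in> \<gamma>)"
  "ep (restrict_to n \<gamma> u) i = (ep u i \<and> n + i \<in> \<gamma>)"
  by (auto simp: restrict_to_def xp_def zp_def ep_def)

lemma restrict_to_in_supported: "u \<in> carrier n m \<Longrightarrow> restrict_to n \<gamma> u \<in> supported n m \<gamma>"
  by (auto simp: supported_def carrier_def supp_def)

lemma bichar_restrict_to:
  assumes "e \<in> supported n m \<gamma>"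
  shows "bichar n m (restrict_to n \<gamma> u) e = bichar n m u e"
proof -
  have "supp n m e \<subseteq> \<gamma>"
    using assms by (auto simp: supported_def)
  then have "{i. i < n \<and> ((xp (restrict_to n \<gamma> u) i \<and> zp e i) \<noteq> (zp (restrict_to n \<gamma> u) i \<and> xp e i))}
         = {i. i < n \<and> ((xp u i \<and> zp e i) \<noteq> (zp u i \<and> xp e i))}"
    and "{i. i < m \<and> ep (restrict_to n \<gamma> u) i \<and> ep e i} = {i. i < m \<and> ep u i \<and> ep e i}"
    by (auto simp: supp_def)
  then show ?thesis
    unfolding bichar_def by simp
qed

lemma synd_stat_restrict_to:
  assumes "\<forall>a. p a \<noteq> 0 \<longrightarrow> supp n m a \<subseteq> \<gamma>"
  shows "synd_stat n m p (restrict_to n \<gamma> u) = synd_stat n m p u"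
  unfolding synd_stat_def
proof (rule sum.cong [OF refl])
  fix e assume e: "e \<in> carrier n m"
  show "bichar n m (restrict_to n \<gamma> u) e * p e = bichar n m u e * p e"
  proof (cases "p e = 0")
    case False
    then have "e \<in> supported n m \<gamma>"
      unfolding supported_def using assms e by blast
    then show ?thesis
      by (simp add: bichar_restrict_to)
  qed simp
qed

definition spectrum_in :: "nat \<Rightarrow> nat \<Rightarrow> pds set \<Rightarrow> (pds \<Rightarrow> real) \<Rightarrow> bool" where
  "spectrum_in n m F \<phi> \<longleftrightarrow> (\<exists>c. \<forall>u\<in>carrier n m. \<phi> u = (\<Sum>x\<in>F. c x * bichar n m u x))"

lemma spectrum_in_supported_if_restrict_invariant:
  assumes invariant: "\<And>u. u \<in> carrier n m \<Longrightarrow> \<phi> (restrict_to n \<gamma> u) = \<phi> u"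
  shows "spectrum_in n m (supported n m \<gamma>) \<phi>"
proof -
  let ?H = "supported n m \<gamma>"
  define c where "c x = (\<Sum>v\<in>?H. \<phi> v * bichar n m v x) / real (card ?H)" for x
  have "card ?H \<noteq> 0"
    using finite_supported ident_in_supported card_0_eq by blast
  then have card_nonzero: "real (card ?H) \<noteq> 0"
    by simp
  have "\<phi> u = (\<Sum>x\<in>?H. c x * bichar n m u x)" if u: "u \<in> carrier n m" for u
  proof -
    let ?r = "restrict_to n \<gamma> u"
    have r: "?r \<in> ?H"
      using restrict_to_in_supported[OF u] .
    have orth: "(\<Sum>x\<in>?H. bichar n m v x * bichar n m u x) = (if v = ?r then real (card ?H) else 0)"
      if "v \<in> ?H" for v
      using sum_bichar_mult_bichar_supported[OF that r] bichar_restrict_to by simp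
    have "(\<Sum>x\<in>?H. c x * bichar n m u x) =
        (\<Sum>x\<in>?H. \<Sum>v\<in>?H. \<phi> v * (bichar n m v x * bichar n m u x)) / real (card ?H)"
      unfolding c_def by (simp add: sum_divide_distrib sum_distrib_left sum_distrib_right mult_ac)
    also have "\<dots> = (\<Sum>v\<in>?H. \<phi> v * (\<Sum>x\<in>?H. bichar n m v x * bichar n m u x)) / real (card ?H)"
      by (subst sum.swap) (simp add: sum_distrib_left)
    also have "\<dots> = \<phi> ?r * real (card ?H) / real (card ?H)"
      using r by (simp add: orth if_distrib[of "\<lambda>x. _ * x"] cong: if_cong)
    also have "\<dots> = \<phi> ?r"
      by (rule nonzero_mult_div_cancel_right[OF card_nonzero])
    also have "\<dots> = \<phi> u"
      using invariant[OF u] .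
    finally show ?thesis
      by simp
  qed
  then show ?thesis
    unfolding spectrum_in_def by blast
qed

lemma spectrum_in_mono:
  assumes "spectrum_in n m F \<phi>" "F \<subseteq> G" "finite G"
  shows "spectrum_in n m G \<phi>"
proof -
  obtain c where c: "\<forall>u\<in>carrier n m. \<phi> u = (\<Sum>x\<in>F. c x * bichar n m u x)"
    using assms(1) by (auto simp: spectrum_in_def)
  have "(\<Sum>x\<in>G. (if x \<in> F then c x else 0) * bichar n m u x) = (\<Sum>x\<in>F. c x * bichar n m u x)" for u
    using assms(2,3) by (simp add: if_distrib[of "\<lambda>y. y * _"] sum.If_cases Int_absorb1)
  then show ?thesis
    using c unfolding spectrum_in_def by (intro exI[of _ "\<lambda>x. if x \<in> F then c x else 0"]) simp
qed

lemma spectrum_in_add: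
  assumes "spectrum_in n m F \<phi>" "spectrum_in n m F \<psi>"
  shows "spectrum_in n m F (\<lambda>u. \<phi> u + \<psi> u)"
proof -
  obtain c d where "\<forall>u\<in>carrier n m. \<phi> u = (\<Sum>x\<in>F. c x * bichar n m u x)"
    and "\<forall>u\<in>carrier n m. \<psi> u = (\<Sum>x\<in>F. d x * bichar n m u x)"
    using assms by (auto simp: spectrum_in_def)
  then show ?thesis
    unfolding spectrum_in_def
    by (intro exI[of _ "\<lambda>x. c x + d x"]) (simp add: distrib_right sum.distrib)
qed

lemma spectrum_in_sum:
  assumes "finite I" "\<And>i. i \<in> I \<Longrightarrow> spectrum_in n m F (\<phi> i)"
  shows "spectrum_in n m F (\<lambda>u. \<Sum>i\<in>I. \<phi> i u)"
  using assms
proof (induction I rule: finite_induct)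
  case empty
  show ?case
    unfolding spectrum_in_def by (intro exI[of _ "\<lambda>_. 0"]) simp
next
  case (insert i I)
  then show ?case
    by (simp add: spectrum_in_add)
qed

lemma spectrum_in_comp_flip_part:
  assumes "spectrum_in n m F \<phi>" "finite F" "flip_part ` F \<subseteq> F"
  shows "spectrum_in n m F (\<lambda>u. \<phi> (flip_part u))"
proof -
  obtain c where c: "\<forall>u\<in>carrier n m. \<phi> u = (\<Sum>x\<in>F. c x * bichar n m u x)"
    using assms(1) by (auto simp: spectrum_in_def)
  define d where "d y = (\<Sum>x\<in>{x\<in>F. flip_part x = y}. c x)" for y
  have "\<phi> (flip_part u) = (\<Sum>y\<in>F. d y * bichar n m u y)" if "u \<in> carrier n m" for u
  proof -
    have "\<phi> (flip_part u) = (\<Sum>x\<in>F. c x * bichar n m u (flip_part x))"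
      using c flip_part_in_carrier[OF that] by (simp add: bichar_flip_part)
    also have "\<dots> = (\<Sum>y\<in>F. \<Sum>x\<in>{x\<in>F. flip_part x = y}. c x * bichar n m u (flip_part x))"
      by (rule sum.group[symmetric]) (use assms(2,3) in auto)
    also have "\<dots> = (\<Sum>y\<in>F. d y * bichar n m u y)"
      unfolding d_def sum_distrib_right by (intro sum.cong refl) auto
    finally show ?thesis .
  qed
  then show ?thesis
    unfolding spectrum_in_def by blast
qed

lemma Mgrp_subset_carrier:
  assumes "\<forall>i<m. g i \<in> carrier n 0"
  shows "Mgrp m g \<subseteq> carrier n m"
proof -
  have gens: "fgen g i \<in> carrier n m" if "i < m" for i
    using assms that by (auto simp: fgen_def carrier_def xp_def zp_def ep_def)
  have "gprod T (fgen g) \<in> carrier n m" if "T \<subseteq> {..<m}" for T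
    using that gens by (intro gprod_in_carrier) (auto intro: finite_subset)
  then show ?thesis
    unfolding Mgrp_def by blast
qed

lemma mult_in_Ugrp: "a \<in> Ugrp n m g \<Longrightarrow> b \<in> Ugrp n m g \<Longrightarrow> mult a b \<in> Ugrp n m g"
  by (auto simp: Ugrp_def perp_def mult_in_carrier bichar_mult_left)

lemma ident_in_Ugrp: "ident \<in> Ugrp n m g"
  by (auto simp: Ugrp_def perp_def)

lemma mult_in_Ugrp_iff:
  assumes "mult a b \<in> Ugrp n m g"
  shows "mult b c \<in> Ugrp n m g \<longleftrightarrow> mult a c \<in> Ugrp n m g"
proof
  have "mult a c = mult (mult a b) (mult b c)"
    by (auto simp: pds_eq_iff)
  then show "mult b c \<in> Ugrp n m g \<Longrightarrow> mult a c \<in> Ugrp n m g"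
    using assms mult_in_Ugrp by simp
next
  have "mult b c = mult (mult a b) (mult a c)"
    by (auto simp: pds_eq_iff)
  then show "mult a c \<in> Ugrp n m g \<Longrightarrow> mult b c \<in> Ugrp n m g"
    using assms mult_in_Ugrp by simp
qed

lemma Ugrp_iff:
  assumes "w \<in> carrier n m"
  shows "w \<in> Ugrp n m g \<longleftrightarrow> (\<forall>t<m. bichar n m w (fgen g t) = 1)"
proof
  assume "w \<in> Ugrp n m g"
  moreover have "fgen g t \<in> Mgrp m g" if "t < m" for t
    unfolding Mgrp_def using that by (intro CollectI exI[of _ "{t}"]) auto
  ultimately show "\<forall>t<m. bichar n m w (fgen g t) = 1"
    by (auto simp: Ugrp_def perp_def)
next
  assume gens: "\<forall>t<m. bichar n m w (fgen g t) = 1"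
  have "bichar n m w (gprod T (fgen g)) = 1" if "T \<subseteq> {..<m}" for T
    using that gens by (auto simp: bichar_gprod finite_subset intro!: prod.neutral)
  then show "w \<in> Ugrp n m g"
    using assms by (auto simp: Ugrp_def perp_def Mgrp_def)
qed

lemma sum_bichar_Mgrp:
  assumes "w \<in> carrier n m"
  shows "(\<Sum>T\<in>Pow {..<m}. bichar n m (gprod T (fgen g)) w) = (if w \<in> Ugrp n m g then 2 ^ m else 0)"
proof -
  let ?x = "\<lambda>t. bichar n m w (fgen g t)"
  have "(\<Sum>T\<in>Pow {..<m}. bichar n m (gprod T (fgen g)) w) = (\<Sum>T\<in>Pow {..<m}. (\<Prod>t\<in>T. ?x t) * (\<Prod>t\<in>{..<m}-T. 1))"
    by (intro sum.cong refl) (auto simp: bichar_commute[of n m _ w] bichar_gprod finite_subset)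
  also have "\<dots> = (\<Prod>t<m. ?x t + 1)"
    by (rule prod_add[symmetric]) simp
  also have "\<dots> = (if w \<in> Ugrp n m g then 2 ^ m else 0)"
  proof (cases "w \<in> Ugrp n m g")
    case True
    then show ?thesis
      using Ugrp_iff[OF assms] by simp
  next
    case False
    then obtain t where "t < m" "?x t \<noteq> 1"
      using Ugrp_iff[OF assms] by blast
    moreover from this have "?x t + 1 = 0"
      using bichar_cases[of n m w "fgen g t"] by auto
    ultimately show ?thesis
      using False by (auto intro!: prod_zero)
  qed
  finally show ?thesis .
qed

text \<open>Orthogonality of the characters of M: summing the character of a against the
  values of the expansion on M picks out the coefficients of the coset of a modulo U.\<close>

lemma sum_coeffs_Ugrp_coset_eq_0:
  assumes c: "\<forall>v\<in>carrier n m. \<phi> v = (\<Sum>x\<in>F. c x * bichar n m v x)"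
    and F: "F \<subseteq> carrier n m" and M: "Mgrp m g \<subseteq> carrier n m" "\<forall>s\<in>Mgrp m g. \<phi> s = 0"
    and a: "a \<in> carrier n m"
  shows "(\<Sum>b\<in>{b \<in> F. mult a b \<in> Ugrp n m g}. c b) = 0"
proof -
  let ?s = "\<lambda>T. gprod T (fgen g)"
  have s: "?s T \<in> Mgrp m g" "?s T \<in> carrier n m" if "T \<in> Pow {..<m}" for T
    using that M(1) by (auto simp: Mgrp_def)
  have F_finite: "finite F"
    using F finite_carrier by (rule finite_subset)
  have "0 = (\<Sum>T\<in>Pow {..<m}. bichar n m (?s T) a * \<phi> (?s T))"
    using M(2) s by simp
  also have "\<dots> = (\<Sum>T\<in>Pow {..<m}. \<Sum>b\<in>F. c b * bichar n m (?s T) (mult a b))"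
    using c s by (simp add: sum_distrib_left bichar_mult_right mult_ac)
  also have "\<dots> = (\<Sum>b\<in>F. c b * (\<Sum>T\<in>Pow {..<m}. bichar n m (?s T) (mult a b)))"
    by (subst sum.swap) (simp add: sum_distrib_left)
  also have "\<dots> = (\<Sum>b\<in>F. 2 ^ m * (if mult a b \<in> Ugrp n m g then c b else 0))"
    using a F by (intro sum.cong refl) (auto simp: sum_bichar_Mgrp mult_in_carrier mult.commute)
  also have "\<dots> = 2 ^ m * (\<Sum>b\<in>{b \<in> F. mult a b \<in> Ugrp n m g}. c b)"
    unfolding sum.inter_filter[OF F_finite] sum_distrib_left ..
  finally show ?thesis
    by simp
qed

lemma sum_eq_0_if_Ugrp_cosets_cancel:
  assumes "finite F"
    and cancel: "\<And>a. a \<in> F \<Longrightarrow> (\<Sum>b\<in>{b \<in> F. mult a b \<in> Ugrp n m g}. c b) = 0"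
    and invariant: "\<And>a b. a \<in> F \<Longrightarrow> b \<in> F \<Longrightarrow> mult a b \<in> Ugrp n m g \<Longrightarrow> f b = f a"
  shows "(\<Sum>b\<in>F. c b * f b) = (0::real)"
proof -
  define coset where "coset a = {b \<in> F. mult a b \<in> Ugrp n m g}" for a
  have same_coset: "coset b = coset a" if "b \<in> coset a" for a b
  proof -
    have "mult a b \<in> Ugrp n m g"
      using that by (simp add: coset_def)
    then show ?thesis
      unfolding coset_def by (simp add: mult_in_Ugrp_iff)
  qed
  have coset_sum: "(\<Sum>b\<in>{b \<in> F. coset b = coset a}. c b * f b) = 0" if a: "a \<in> F" for a
  proof -
    have "b \<in> coset b" if "b \<in> F" for b
      using that by (simp add: coset_def ident_in_Ugrp)
    moreover have "coset a \<subseteq> F"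
      by (auto simp: coset_def)
    ultimately have "{b \<in> F. coset b = coset a} = coset a"
      using same_coset by blast
    then have "(\<Sum>b\<in>{b \<in> F. coset b = coset a}. c b * f b) = (\<Sum>b\<in>coset a. c b * f a)"
      using invariant[OF a] by (intro sum.cong refl) (auto simp: coset_def)
    also have "\<dots> = 0"
      using cancel[OF a] by (simp add: coset_def sum_distrib_right[symmetric])
    finally show ?thesis .
  qed
  have "(\<Sum>b\<in>F. c b * f b) = (\<Sum>C\<in>coset ` F. \<Sum>b\<in>{b \<in> F. coset b = C}. c b * f b)"
    using assms(1) by (intro sum.group[symmetric]) auto
  also have "\<dots> = 0"
    using coset_sum by (intro sum.neutral) auto
  finally show ?thesis .
qed

lemma spectrum_in_vanishes_on_perp:
  assumes spec: "spectrum_in n m F \<phi>" and F: "F \<subseteq> carrier n m"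
    and M: "Mgrp m g \<subseteq> carrier n m" "\<forall>s\<in>Mgrp m g. \<phi> s = 0"
    and separated: "\<forall>a\<in>F. \<forall>b\<in>F. mult a b \<in> Ugrp n m g \<longrightarrow> mult a b \<in> S"
    and u: "u \<in> perp n m S"
  shows "\<phi> u = 0"
proof -
  obtain c where c: "\<forall>v\<in>carrier n m. \<phi> v = (\<Sum>x\<in>F. c x * bichar n m v x)"
    using spec by (auto simp: spectrum_in_def)
  have "u \<in> carrier n m"
    using u by (simp add: perp_def)
  then have "\<phi> u = (\<Sum>b\<in>F. c b * bichar n m u b)"
    using c by blast
  also have "\<dots> = 0"
  proof (rule sum_eq_0_if_Ugrp_cosets_cancel)
    show "finite F"
      using F finite_carrier by (rule finite_subset)
    show "(\<Sum>b\<in>{b \<in> F. mult a b \<in> Ugrp n m g}. c b) = 0" if "a \<in> F" for a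
      using c F M that by (intro sum_coeffs_Ugrp_coset_eq_0) auto
    show "bichar n m u b = bichar n m u a"
      if "a \<in> F" "b \<in> F" "mult a b \<in> Ugrp n m g" for a b
    proof -
      have "bichar n m u (mult a b) = 1"
        using that separated u unfolding perp_def by blast
      then show ?thesis
        using bichar_eq_if_bichar_mult_eq_1 by simp
    qed
  qed
  finally show ?thesis .
qed

lemma in_stabilizer_if_low_weight:
  assumes "ident \<in> S" "w \<in> Ugrp n m g"
    and "weight n m w \<le> 2 * ((code_distance n m S g - 1) div 2)"
  shows "w \<in> S"
proof (rule ccontr)
  let ?d = "code_distance n m S g"
  assume "w \<notin> S"
  then have "?d \<le> weight n m w"
    unfolding code_distance_def using assms(2) by (intro cInf_lower) auto
  moreover have "2 * ((?d - 1) div 2) \<le> ?d - 1"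
    by simp
  ultimately have "card (supp n m w) = 0"
    using assms(3) unfolding weight_def by linarith
  then have "supp n m w = {}"
    using finite_supp card_0_eq by blast
  moreover have "w \<in> carrier n m"
    using assms(2) by (simp add: Ugrp_def perp_def)
  ultimately have "w = ident"
    using supp_empty_iff by blast
  with \<open>w \<notin> S\<close> assms(1) show False
    by simp
qed

lemma mult_supported_in_Ugrp_imp_in_stabilizer:
  assumes "ident \<in> S" and short: "\<forall>\<gamma>\<in>\<Gamma>. finite \<gamma> \<and> card \<gamma> \<le> (code_distance n m S g - 1) div 2"
    and "\<gamma> \<in> \<Gamma>" "\<gamma>' \<in> \<Gamma>" "a \<in> supported n m \<gamma>" "b \<in> supported n m \<gamma>'"
    and "mult a b \<in> Ugrp n m g"
  shows "mult a b \<in> S"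
proof (rule in_stabilizer_if_low_weight[OF assms(1) assms(7)])
  have "weight n m (mult a b) \<le> card \<gamma> + card \<gamma>'"
    using assms(3-6) short by (intro weight_mult_le) auto
  moreover have "card \<gamma> \<le> (code_distance n m S g - 1) div 2" "card \<gamma>' \<le> (code_distance n m S g - 1) div 2"
    using assms(3,4) short by blast+
  ultimately show "weight n m (mult a b) \<le> 2 * ((code_distance n m S g - 1) div 2)"
    by linarith
qed

lemma fourier_inversion:
  assumes "a \<in> carrier n m"
  shows "(\<Sum>u\<in>carrier n m. bichar n m u a * synd_stat n m p u) = real (card (carrier n m)) * p a"
proof -
  let ?G = "carrier n m"
  have orth: "(\<Sum>u\<in>?G. bichar n m u (mult a b)) = (if a = b then real (card ?G) else 0)"
    if "b \<in> ?G" for b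
    using sum_bichar_supported[of "mult a b" n m UNIV] assms that
    by (simp add: supported_UNIV mult_in_carrier mult_eq_ident_iff)
  have "(\<Sum>u\<in>?G. bichar n m u a * synd_stat n m p u) = (\<Sum>b\<in>?G. p b * (\<Sum>u\<in>?G. bichar n m u (mult a b)))"
    unfolding synd_stat_def sum_distrib_left
    by (subst sum.swap) (simp add: bichar_mult_right mult_ac)
  also have "\<dots> = real (card ?G) * p a"
    using assms by (simp add: orth if_distrib[of "\<lambda>x. _ * x"] finite_carrier cong: if_cong)
  finally show ?thesis .
qed

lemma sum_bichar_stabilizer_eq_0:
  assumes "stabilizer_group n S" "u \<in> carrier n m" "u \<notin> perp n m S"
  shows "(\<Sum>s\<in>S. bichar n m u s) = 0"
proof -
  have S: "S \<subseteq> carrier n 0" "\<forall>a\<in>S. \<forall>b\<in>S. mult a b \<in> S"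
    using assms(1) by (auto simp: stabilizer_group_def)
  obtain s0 where "s0 \<in> S" "bichar n m u s0 \<noteq> 1"
    using assms(2,3) by (auto simp: perp_def)
  then have "bichar n m u s0 = -1"
    using bichar_cases by metis
  show ?thesis
  proof (rule sum_eq_0_if_translation_negates)
    show "finite S"
      using S(1) finite_carrier by (rule finite_subset)
  qed (use S(2) \<open>s0 \<in> S\<close> \<open>bichar n m u s0 = -1\<close> in \<open>auto simp: bichar_mult_right\<close>)
qed

text \<open>Fourier inversion; the characters outside S-perp average out over S.\<close>

lemma logical_channel_eq_if_synd_stat_eq_on_perp:
  assumes S: "stabilizer_group n S"
    and eq: "\<forall>u\<in>perp n m S. synd_stat n m p u = synd_stat n m q u"
    and e: "e \<in> carrier n m"
  shows "logical_channel S p e = logical_channel S q e"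
proof -
  let ?G = "carrier n m" and ?N = "real (card (carrier n m))"
  define r where "r a = p a - q a" for a
  have synd_r: "synd_stat n m r u = synd_stat n m p u - synd_stat n m q u" for u
    by (simp add: r_def synd_stat_def sum_subtractf right_diff_distrib)
  have "S \<subseteq> ?G"
    using S by (auto simp: stabilizer_group_def carrier_def)
  then have "?N * r (mult e s) = (\<Sum>u\<in>?G. bichar n m u (mult e s) * synd_stat n m r u)" if "s \<in> S" for s
    using fourier_inversion[OF mult_in_carrier[OF e], of s r] that by auto
  then have "?N * (\<Sum>s\<in>S. r (mult e s)) = (\<Sum>s\<in>S. \<Sum>u\<in>?G. bichar n m u (mult e s) * synd_stat n m r u)"
    by (simp add: sum_distrib_left)
  also have "\<dots> = (\<Sum>u\<in>?G. synd_stat n m r u * bichar n m u e * (\<Sum>s\<in>S. bichar n m u s))"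
    by (subst sum.swap) (simp add: sum_distrib_left bichar_mult_right mult_ac)
  also have "\<dots> = 0"
  proof (intro sum.neutral ballI)
    fix u assume u: "u \<in> ?G"
    show "synd_stat n m r u * bichar n m u e * (\<Sum>s\<in>S. bichar n m u s) = 0"
    proof (cases "u \<in> perp n m S")
      case True
      then show ?thesis
        using eq by (simp add: synd_r)
    next
      case False
      then show ?thesis
        using sum_bichar_stabilizer_eq_0[OF S u] by simp
    qed
  qed
  finally have "(\<Sum>s\<in>S. p (mult e s)) = (\<Sum>s\<in>S. q (mult e s))"
    using e finite_carrier by (auto simp: r_def sum_subtractf card_0_eq)
  then show ?thesis
    by (simp add: logical_channel_def)
qed

lemma synd_stat_pos_if_admissible:
  assumes "admissible n m \<Gamma> Pf" "\<gamma> \<in> \<Gamma>"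
  shows "synd_stat n m (Pf \<gamma>) u > 0"
  using assms synd_stat_pos unfolding admissible_def by blast

lemma synd_stat_conv_family_pos:
  assumes "finite \<Gamma>" "admissible n m \<Gamma> Pf"
  shows "synd_stat n m (conv_family n m \<Gamma> Pf) u > 0"
  unfolding synd_stat_conv_family[OF assms(1)]
  using assms(2) by (intro prod_pos) (rule synd_stat_pos_if_admissible)

lemma spectrum_in_log_ratio:
  assumes "finite \<Gamma>" "\<forall>\<gamma>\<in>\<Gamma>. finite \<gamma>" "admissible n m \<Gamma> Pf" "admissible n m \<Gamma> Qf"
  shows "spectrum_in n m (\<Union>\<gamma>\<in>\<Gamma>. supported n m \<gamma>)
    (\<lambda>u. ln (synd_stat n m (conv_family n m \<Gamma> Pf) u) - ln (synd_stat n m (conv_family n m \<Gamma> Qf) u))"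
proof -
  let ?D = "\<lambda>\<gamma> u. ln (synd_stat n m (Pf \<gamma>) u) - ln (synd_stat n m (Qf \<gamma>) u)"
  have local: "spectrum_in n m (supported n m \<gamma>) (?D \<gamma>)" if "\<gamma> \<in> \<Gamma>" for \<gamma>
  proof (rule spectrum_in_supported_if_restrict_invariant)
    have "\<forall>a. Pf \<gamma> a \<noteq> 0 \<longrightarrow> supp n m a \<subseteq> \<gamma>" "\<forall>a. Qf \<gamma> a \<noteq> 0 \<longrightarrow> supp n m a \<subseteq> \<gamma>"
      using assms(3,4) that unfolding admissible_def by blast+
    then show "?D \<gamma> (restrict_to n \<gamma> u) = ?D \<gamma> u" for u
      by (simp add: synd_stat_restrict_to)
  qed
  have "spectrum_in n m (\<Union>\<gamma>\<in>\<Gamma>. supported n m \<gamma>) (?D \<gamma>)" if "\<gamma> \<in> \<Gamma>" for \<gamma>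
    using local[OF that] by (rule spectrum_in_mono) (use assms(1) that in auto)
  then have "spectrum_in n m (\<Union>\<gamma>\<in>\<Gamma>. supported n m \<gamma>) (\<lambda>u. \<Sum>\<gamma>\<in>\<Gamma>. ?D \<gamma> u)"
    by (rule spectrum_in_sum[OF assms(1)])
  moreover have "(\<Sum>\<gamma>\<in>\<Gamma>. ?D \<gamma> u) =
      ln (synd_stat n m (conv_family n m \<Gamma> Pf) u) - ln (synd_stat n m (conv_family n m \<Gamma> Qf) u)" for u
    using assms(1,3,4) synd_stat_pos_if_admissible
    by (simp add: synd_stat_conv_family ln_prod less_imp_not_eq2 sum_subtractf)
  ultimately show ?thesis
    by simp
qed

lemma synd_stat_eq_on_perp:
  assumes S: "S \<subseteq> carrier n 0" and M: "Mgrp m g \<subseteq> carrier n m"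
    and F: "F \<subseteq> carrier n m" "flip_part ` F \<subseteq> F"
    and separated: "\<forall>a\<in>F. \<forall>b\<in>F. mult a b \<in> Ugrp n m g \<longrightarrow> mult a b \<in> S"
    and pos: "\<And>u. synd_stat n m p u > 0" "\<And>u. synd_stat n m q u > 0"
    and spec: "spectrum_in n m F (\<lambda>u. ln (synd_stat n m p u) - ln (synd_stat n m q u))"
    and observed: "\<forall>s\<in>Mgrp m g. synd_stat n m (tilde n m p) s = synd_stat n m (tilde n m q) s"
    and u: "u \<in> perp n m S"
  shows "synd_stat n m p u = synd_stat n m q u"
proof -
  define L where "L u = ln (synd_stat n m p u) - ln (synd_stat n m q u)" for u
  have "finite F"
    using F(1) finite_carrier by (rule finite_subset)
  then have spec_sym: "spectrum_in n m F (\<lambda>u. L u + L (flip_part u))"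
    using spec F(2) unfolding L_def by (intro spectrum_in_add spectrum_in_comp_flip_part)
  have on_M: "\<forall>s\<in>Mgrp m g. L s + L (flip_part s) = 0"
  proof
    fix s assume "s \<in> Mgrp m g"
    then have "ln (synd_stat n m p s * synd_stat n m p (flip_part s)) =
        ln (synd_stat n m q s * synd_stat n m q (flip_part s))"
      using observed by (simp add: synd_stat_tilde)
    then have "ln (synd_stat n m p s) + ln (synd_stat n m p (flip_part s)) =
        ln (synd_stat n m q s) + ln (synd_stat n m q (flip_part s))"
      using pos by (simp add: ln_mult less_imp_not_eq2)
    then show "L s + L (flip_part s) = 0"
      unfolding L_def by linarith
  qed
  have vanish: "L v + L (flip_part v) = 0" if "v \<in> perp n m S" for v
    using spectrum_in_vanishes_on_perp[OF spec_sym F(1) M on_M separated that] .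
  \<comment> \<open>flip_part is idempotent, so at flip_part u both summands coincide\<close>
  have "L (flip_part u) = 0"
    using vanish[OF flip_part_in_perp[OF S u]] by simp
  then have "L u = 0"
    using vanish[OF u] by simp
  then show ?thesis
    using pos by (simp add: L_def)
qed

theorem corollary2:
  fixes n m :: nat and S :: "pds set" and g :: "nat \<Rightarrow> pds"
    and \<Gamma> :: "nat set set" and Pf Qf :: "nat set \<Rightarrow> pds \<Rightarrow> real"
  assumes "stabilizer_group n S"
    and "\<forall>i<m. g i \<in> S"
    and "\<Gamma> \<subseteq> Pow {..<n + m}"
    and "\<forall>\<gamma>\<in>\<Gamma>. card \<gamma> \<le> (code_distance n m S g - 1) div 2"
    and "admissible n m \<Gamma> Pf"
    and "admissible n m \<Gamma> Qf"
    and "\<forall>s\<in>Mgrp m g.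
           synd_stat n m (tilde n m (conv_family n m \<Gamma> Pf)) s
         = synd_stat n m (tilde n m (conv_family n m \<Gamma> Qf)) s"
  shows "\<forall>e\<in>carrier n m.
           logical_channel S (conv_family n m \<Gamma> Pf) e
         = logical_channel S (conv_family n m \<Gamma> Qf) e"
proof -
  have S: "S \<subseteq> carrier n 0" "ident \<in> S"
    using assms(1) by (auto simp: stabilizer_group_def)
  have \<Gamma>: "finite \<Gamma>" "\<forall>\<gamma>\<in>\<Gamma>. finite \<gamma>"
    using assms(3) by (auto intro: finite_subset)
  define F where "F = (\<Union>\<gamma>\<in>\<Gamma>. supported n m \<gamma>)"
  have separated: "\<forall>a\<in>F. \<forall>b\<in>F. mult a b \<in> Ugrp n m g \<longrightarrow> mult a b \<in> S"
    unfolding F_def using S(2) \<Gamma>(2) assms(4) mult_supported_in_Ugrp_imp_in_stabilizer by blast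
  have "synd_stat n m (conv_family n m \<Gamma> Pf) u = synd_stat n m (conv_family n m \<Gamma> Qf) u"
    if "u \<in> perp n m S" for u
  proof (rule synd_stat_eq_on_perp[OF S(1) _ _ _ separated _ _ _ assms(7) that])
    show "Mgrp m g \<subseteq> carrier n m"
      using assms(2) S(1) by (intro Mgrp_subset_carrier) blast
    show "F \<subseteq> carrier n m" "flip_part ` F \<subseteq> F"
      unfolding F_def using supported_subset_carrier flip_part_in_supported by auto
    show "synd_stat n m (conv_family n m \<Gamma> Pf) v > 0" "synd_stat n m (conv_family n m \<Gamma> Qf) v > 0" for v
      using \<Gamma>(1) assms(5,6) by (simp_all add: synd_stat_conv_family_pos)
    show "spectrum_in n m F (\<lambda>u. ln (synd_stat n m (conv_family n m \<Gamma> Pf) u)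
        - ln (synd_stat n m (conv_family n m \<Gamma> Qf) u))"
      unfolding F_def using \<Gamma> assms(5,6) by (rule spectrum_in_log_ratio)
  qed
  then show ?thesis
    using logical_channel_eq_if_synd_stat_eq_on_perp[OF assms(1)] by blast
qed

end
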